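(* Let $(\mathcal{X},\preceq)$ be an $\omega$-chain complete partially ordered set and $\Lambda$ a set. For finite disjoint $\mathcal{I},\mathcal{O}\subseteq\Lambda$ let $\mathfrak{N}_{\mathcal{I},\mathcal{O}}$ be the set of all $\omega$-continuous functions $\mathcal{X}^{\mathcal{I}}\to\mathcal{X}^{\mathcal{O}}$, and $\mathfrak{N}$ their union. For $s\in\mathfrak{N}_{\mathcal{I},\mathcal{O}}$ let $\Gamma(s)=\{\{i,o\}\mid i\in\mathcal{I},o\in\mathcal{O}\}$ and let $\phi^s_{i,o}(\mathbf{x})$ be the least $x_i\in\mathcal{X}$ with $s(\mathbf{x}\cup\{(i,x_i)\})(o)=x_i$. Then the resulting structure $(\mathfrak{N},\lambda,\parallel,\Gamma,\gamma)$ is a functional $\Lambda$-system algebra over $\mathcal{X}$; in particular, $\mathfrak{N}$ is closed under parallel composition and $\gamma_{i,o}(s)\in\mathfrak{N}_{\mathcal{I}\setminus\{i\},\mathcal{O}\setminus\{o\}}$ for all $s\in\mathfrak{N}_{\mathcal{I},\mathcal{O}}$, $i\in\mathcal{I}$, $o\in\mathcal{O}$.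
   Context: An $\omega$-chain is a sequence $(x_n)_{n\in\mathbb{N}}$ with $x_i\preceq x_j$ for $i\le j$; an $\omega$-CPO is a poset with least element in which every $\omega$-chain has a supremum. $\mathcal{X}^{\mathcal{I}}$ (functions $\mathcal{I}\to\mathcal{X}$) is ordered componentwise. $f$ is $\omega$-continuous if for every $\omega$-chain $C$, $\sup f(C)$ exists and equals $f(\sup C)$; such least fixed points exist. Operations: $\lambda(s)=\mathcal{I}\cup\mathcal{O}$; for $s_j\in\mathfrak{N}_{\mathcal{I}_j,\mathcal{O}_j}$ with the four index sets pairwise disjoint, $(s_1\parallel s_2)(\mathbf{x})(o_j)=s_j(\mathbf{x}|_{\mathcal{I}_j})(o_j)$ for $o_j\in\mathcal{O}_j$; $\gamma_{i,o}(s)(\mathbf{x})=s(\mathbf{x}\cup\{(i,\phi^s_{i,o}(\mathbf{x}))\})|_{\mathcal{O}\setminus\{o\}}$ for $\mathbf{x}\in\mathcal{X}^{\mathcal{I}\setminus\{i\}}$. A functional $\Lambda$-system algebra over $\mathcal{X}$ is such a structure whose system set is closed under $\parallel$ and $\gamma$ and in which, for systems with disjoint interface sets, $\{i,o\}\in\Gamma(s_1\parallel s_2)\iff\{i,o\}\in\Gamma(s_j)$ for $i,o\in\lambda(s_j)$. *)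

theory Defs
  imports "HOL-Library.FuncSet"
begin

definition omega_chain :: "(nat \<Rightarrow> 'a::order) \<Rightarrow> bool" where
  "omega_chain c \<longleftrightarrow> (\<forall>m n. m \<le> n \<longrightarrow> c m \<le> c n)"

definition is_lub :: "'a::order set \<Rightarrow> 'a \<Rightarrow> bool" where
  "is_lub A u \<longleftrightarrow> (\<forall>a\<in>A. a \<le> u) \<and> (\<forall>v. (\<forall>a\<in>A. a \<le> v) \<longrightarrow> u \<le> v)"

definition omega_cpo :: "'a::order itself \<Rightarrow> bool" where
  "omega_cpo T \<longleftrightarrow> (\<exists>b::'a. \<forall>y. b \<le> y) \<and>
     (\<forall>c::nat \<Rightarrow> 'a. omega_chain c \<longrightarrow> (\<exists>u. is_lub (range c) u))"

text \<open>An element of X^I is a function extensional on I (undefined outside I).\<close>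
definition pw_le :: "'l set \<Rightarrow> ('l \<Rightarrow> 'x::order) \<Rightarrow> ('l \<Rightarrow> 'x) \<Rightarrow> bool" where
  "pw_le I x y \<longleftrightarrow> (\<forall>i\<in>I. x i \<le> y i)"

definition lub_on :: "'l set \<Rightarrow> ('l \<Rightarrow> 'x::order) set \<Rightarrow> ('l \<Rightarrow> 'x) \<Rightarrow> bool" where
  "lub_on I A u \<longleftrightarrow> u \<in> I \<rightarrow>\<^sub>E UNIV \<and> (\<forall>a\<in>A. pw_le I a u) \<and>
     (\<forall>v\<in>I \<rightarrow>\<^sub>E UNIV. (\<forall>a\<in>A. pw_le I a v) \<longrightarrow> pw_le I u v)"

definition omega_chain_on :: "'l set \<Rightarrow> (nat \<Rightarrow> ('l \<Rightarrow> 'x::order)) \<Rightarrow> bool" where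
  "omega_chain_on I c \<longleftrightarrow> (\<forall>n. c n \<in> I \<rightarrow>\<^sub>E UNIV) \<and> (\<forall>m n. m \<le> n \<longrightarrow> pw_le I (c m) (c n))"

definition omega_cont :: "'l set \<Rightarrow> 'l set \<Rightarrow> (('l \<Rightarrow> 'x::order) \<Rightarrow> ('l \<Rightarrow> 'x)) \<Rightarrow> bool" where
  "omega_cont I Out f \<longleftrightarrow> (\<forall>c u. omega_chain_on I c \<and> lub_on I (range c) u \<longrightarrow>
       lub_on Out (f ` range c) (f u))"

record ('l, 'x) sys =
  ins :: "'l set"
  outs :: "'l set"
  fn :: "('l \<Rightarrow> 'x) \<Rightarrow> ('l \<Rightarrow> 'x)"

definition NIO :: "'l set \<Rightarrow> 'l set \<Rightarrow> 'l set \<Rightarrow> ('l, 'x::order) sys set" where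
  "NIO Lam I Out = {s. ins s = I \<and> outs s = Out \<and> finite I \<and> finite Out \<and> I \<inter> Out = {} \<and>
       I \<subseteq> Lam \<and> Out \<subseteq> Lam \<and>
       fn s \<in> (I \<rightarrow>\<^sub>E UNIV) \<rightarrow>\<^sub>E (Out \<rightarrow>\<^sub>E UNIV) \<and> omega_cont I Out (fn s)}"

definition NN :: "'l set \<Rightarrow> ('l, 'x::order) sys set" where
  "NN Lam = (\<Union>I Out. NIO Lam I Out)"

definition lam :: "('l, 'x) sys \<Rightarrow> 'l set" where
  "lam s = ins s \<union> outs s"

definition Gam :: "('l, 'x) sys \<Rightarrow> 'l set set" where
  "Gam s = {{i, k} | i k. i \<in> ins s \<and> k \<in> outs s}"

definition par :: "('l, 'x) sys \<Rightarrow> ('l, 'x) sys \<Rightarrow> ('l, 'x) sys" where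
  "par s1 s2 = \<lparr>ins = ins s1 \<union> ins s2, outs = outs s1 \<union> outs s2,
     fn = (\<lambda>x\<in>(ins s1 \<union> ins s2) \<rightarrow>\<^sub>E UNIV. \<lambda>k\<in>outs s1 \<union> outs s2.
             if k \<in> outs s1 then fn s1 (restrict x (ins s1)) k
             else fn s2 (restrict x (ins s2)) k)\<rparr>"

definition phi :: "('l, 'x::order) sys \<Rightarrow> 'l \<Rightarrow> 'l \<Rightarrow> ('l \<Rightarrow> 'x) \<Rightarrow> 'x" where
  "phi s i k x = (LEAST xi. fn s (x(i := xi)) k = xi)"

definition gam :: "'l \<Rightarrow> 'l \<Rightarrow> ('l, 'x::order) sys \<Rightarrow> ('l, 'x) sys" where
  "gam i k s = \<lparr>ins = ins s - {i}, outs = outs s - {k},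
     fn = (\<lambda>x\<in>(ins s - {i}) \<rightarrow>\<^sub>E UNIV.
             restrict (fn s (x(i := phi s i k x))) (outs s - {k}))\<rparr>"

end

theory Submission
  imports Defs
begin

text \<open>
  On disjoint index sets parallel composition acts componentwise, so it preserves
  \<open>\<omega>\<close>-continuity output by output. For feedback, \<open>\<phi>(x)\<close> is the Kleene least fixed point
  of the \<open>\<omega>\<close>-continuous map \<open>t \<mapsto> s(x \<union> {(i,t)})(o)\<close>, and it is monotone in \<open>x\<close>.
  Along a chain \<open>x\<^sub>n\<close> with supremum \<open>x\<close> the values \<open>p\<^sub>n = \<phi>(x\<^sub>n)\<close> therefore form a chain;
  joint continuity of \<open>s\<close> makes \<open>sup p\<^sub>n\<close> a fixed point at \<open>x\<close>, hence equal to \<open>\<phi>(x)\<close>,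
  and the same joint continuity then gives continuity of \<open>\<gamma>\<^sub>i\<^sub>,\<^sub>o(s)\<close>.
\<close>

lemma is_lub_unique: "is_lub A u \<Longrightarrow> is_lub A v \<Longrightarrow> u = (v::'a::order)"
  unfolding is_lub_def by (meson order.antisym)

lemma lub_on_iff_componentwise:
  "lub_on I A u \<longleftrightarrow> u \<in> I \<rightarrow>\<^sub>E UNIV \<and> (\<forall>j\<in>I. is_lub ((\<lambda>a. a j) ` A) (u j))"
proof
  assume "lub_on I A u"
  hence uE: "u \<in> I \<rightarrow>\<^sub>E UNIV" and ub: "\<forall>a\<in>A. pw_le I a u"
    and least: "\<forall>v\<in>I \<rightarrow>\<^sub>E UNIV. (\<forall>a\<in>A. pw_le I a v) \<longrightarrow> pw_le I u v"
    by (auto simp: lub_on_def)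
  have "is_lub ((\<lambda>a. a j) ` A) (u j)" if j: "j \<in> I" for j
    unfolding is_lub_def
  proof (intro conjI allI impI ballI)
    fix b assume "b \<in> (\<lambda>a. a j) ` A"
    thus "b \<le> u j" using ub j by (auto simp: pw_le_def)
  next
    fix w assume w: "\<forall>b\<in>(\<lambda>a. a j) ` A. b \<le> w"
    have "u(j := w) \<in> I \<rightarrow>\<^sub>E UNIV" using uE j by (auto simp: PiE_def extensional_def)
    moreover have "\<forall>a\<in>A. pw_le I a (u(j := w))" using ub w by (auto simp: pw_le_def)
    ultimately have "pw_le I u (u(j := w))" using least by blast
    thus "u j \<le> w" using j by (auto simp: pw_le_def)
  qed
  with uE show "u \<in> I \<rightarrow>\<^sub>E UNIV \<and> (\<forall>j\<in>I. is_lub ((\<lambda>a. a j) ` A) (u j))" by blast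
next
  assume "u \<in> I \<rightarrow>\<^sub>E UNIV \<and> (\<forall>j\<in>I. is_lub ((\<lambda>a. a j) ` A) (u j))"
  thus "lub_on I A u" by (auto simp: lub_on_def pw_le_def is_lub_def)
qed

lemma lub_on_restrict:
  assumes "lub_on I A u" and "J \<subseteq> I"
  shows "lub_on J ((\<lambda>a. restrict a J) ` A) (restrict u J)"
  using assms unfolding lub_on_iff_componentwise by (auto simp: image_image)

lemma omega_chain_on_restrict:
  assumes "omega_chain_on I c" and "J \<subseteq> I"
  shows "omega_chain_on J (\<lambda>n. restrict (c n) J)"
  using assms by (auto simp: omega_chain_on_def pw_le_def)

lemma omega_cont_imp_mono:
  assumes "omega_cont I Out f" "x \<in> I \<rightarrow>\<^sub>E UNIV" "y \<in> I \<rightarrow>\<^sub>E UNIV" "pw_le I x y"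
  shows "pw_le Out (f x) (f y)"
proof -
  define c where "c = (\<lambda>n::nat. if n = 0 then x else y)"
  have rc: "range c = {x, y}" by (auto simp: c_def)
  have "omega_chain_on I c" using assms by (auto simp: omega_chain_on_def c_def pw_le_def)
  moreover have "lub_on I (range c) y" unfolding rc lub_on_def using assms by (auto simp: pw_le_def)
  ultimately have "lub_on Out (f ` range c) (f y)" using assms(1) by (auto simp: omega_cont_def)
  thus ?thesis unfolding rc lub_on_def by auto
qed

section \<open>Kleene's fixed point theorem\<close>

definition omega_continuous :: "('a::order \<Rightarrow> 'a) \<Rightarrow> bool" where
  "omega_continuous g \<longleftrightarrow>
     (\<forall>t l. omega_chain t \<and> is_lub (range t) l \<longrightarrow> is_lub (range (\<lambda>n. g (t n))) (g l))"

lemma omega_continuous_imp_mono: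
  assumes "omega_continuous g" and "a \<le> b"
  shows "g a \<le> g b"
proof -
  define t where "t = (\<lambda>n::nat. if n = 0 then a else b)"
  have "omega_chain t" using assms(2) by (auto simp: omega_chain_def t_def)
  moreover have "is_lub (range t) b" using assms(2) by (auto simp: is_lub_def t_def)
  ultimately have "is_lub (range (\<lambda>n. g (t n))) (g b)"
    using assms(1) by (auto simp: omega_continuous_def)
  moreover have "g a \<in> range (\<lambda>n. g (t n))" by (auto simp: t_def intro: range_eqI[of _ _ 0])
  ultimately show ?thesis by (auto simp: is_lub_def)
qed

theorem omega_cpo_least_fixpoint:
  fixes g :: "'x::order \<Rightarrow> 'x"
  assumes cpo: "omega_cpo TYPE('x)" and cont: "omega_continuous g"
  obtains a where "g a = a" and "\<And>p. g p \<le> p \<Longrightarrow> a \<le> p"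
proof -
  obtain b :: 'x where b: "\<And>y. b \<le> y" using cpo by (auto simp: omega_cpo_def)
  define t where "t n = (g ^^ n) b" for n
  have t_Suc: "t (Suc n) = g (t n)" for n by (simp add: t_def)
  have "t n \<le> t (Suc n)" for n
    by (induction n) (auto simp: t_Suc b t_def intro: omega_continuous_imp_mono[OF cont])
  hence chain: "omega_chain t" unfolding omega_chain_def by (auto intro: lift_Suc_mono_le)
  then obtain a where a: "is_lub (range t) a" using cpo by (auto simp: omega_cpo_def)
  \<comment> \<open>the shifted chain \<open>g \<circ> t\<close> has the same upper bounds as \<open>t\<close>, since \<open>t 0\<close> is least\<close>
  have "is_lub (range (\<lambda>n. g (t n))) a"
    unfolding is_lub_def t_Suc[symmetric]
  proof (intro conjI allI impI ballI)
    fix y assume "y \<in> range (\<lambda>n. t (Suc n))"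
    thus "y \<le> a" using a by (auto simp: is_lub_def)
  next
    fix v assume v: "\<forall>y\<in>range (\<lambda>n. t (Suc n)). y \<le> v"
    have "t n \<le> v" for n
      using v b by (cases n) (auto simp: t_def)
    thus "a \<le> v" using a by (auto simp: is_lub_def)
  qed
  moreover have "is_lub (range (\<lambda>n. g (t n))) (g a)"
    using cont chain a by (auto simp: omega_continuous_def)
  ultimately have "g a = a" by (rule is_lub_unique[symmetric])
  moreover have "a \<le> p" if gp: "g p \<le> p" for p
  proof -
    have "t n \<le> p" for n
    proof (induction n)
      case 0 show ?case by (simp add: t_def b)
    next
      case (Suc n)
      have "t (Suc n) \<le> g p" unfolding t_Suc using Suc by (rule omega_continuous_imp_mono[OF cont])
      thus ?case using gp by simp
    qed
    thus "a \<le> p" using a by (auto simp: is_lub_def)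
  qed
  ultimately show thesis using that by blast
qed

section \<open>The feedback operator\<close>

lemma NIO_cont_update:
  assumes s: "s \<in> NIO Lam I Out" and i: "i \<in> I"
    and c: "omega_chain_on (I - {i}) c" and u: "lub_on (I - {i}) (range c) u"
    and p: "omega_chain p" and l: "is_lub (range p) l"
  shows "lub_on Out (range (\<lambda>n. fn s ((c n)(i := p n)))) (fn s (u(i := l)))"
proof -
  define d where "d = (\<lambda>n. (c n)(i := p n))"
  have "omega_chain_on I d"
    using c p i unfolding omega_chain_on_def d_def omega_chain_def pw_le_def
    by (auto simp: PiE_def extensional_def)
  moreover have "lub_on I (range d) (u(i := l))"
    unfolding lub_on_iff_componentwise
  proof (intro conjI ballI)
    show "u(i := l) \<in> I \<rightarrow>\<^sub>E UNIV" using u i by (auto simp: lub_on_def PiE_def extensional_def)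
    fix j assume j: "j \<in> I"
    show "is_lub ((\<lambda>a. a j) ` range d) ((u(i := l)) j)"
    proof (cases "j = i")
      case True
      thus ?thesis using l by (simp add: d_def image_image)
    next
      case False
      have "(\<lambda>a. a j) ` range d = (\<lambda>a. a j) ` range c" using False by (simp add: d_def image_image)
      thus ?thesis using False u j unfolding lub_on_iff_componentwise by auto
    qed
  qed
  ultimately have "lub_on Out (fn s ` range d) (fn s (u(i := l)))"
    using s by (auto simp: NIO_def omega_cont_def)
  thus ?thesis by (simp add: d_def image_image)
qed

lemma NIO_omega_continuous_in_input:
  fixes s :: "('l, 'x::order) sys"
  assumes s: "s \<in> NIO Lam I Out" and i: "i \<in> I" and k: "k \<in> Out"
    and x: "x \<in> (I - {i}) \<rightarrow>\<^sub>E UNIV"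
  shows "omega_continuous (\<lambda>t. fn s (x(i := t)) k)"
  unfolding omega_continuous_def
proof (intro allI impI, elim conjE)
  fix t :: "nat \<Rightarrow> 'x" and l assume "omega_chain t" "is_lub (range t) l"
  moreover have "omega_chain_on (I - {i}) (\<lambda>n. x)" using x by (simp add: omega_chain_on_def pw_le_def)
  moreover have "lub_on (I - {i}) (range (\<lambda>n. x)) x" using x by (simp add: lub_on_def pw_le_def)
  ultimately have "lub_on Out (range (\<lambda>n. fn s (x(i := t n)))) (fn s (x(i := l)))"
    using NIO_cont_update[OF s i] by simp
  thus "is_lub (range (\<lambda>n. fn s (x(i := t n)) k)) (fn s (x(i := l)) k)"
    using k unfolding lub_on_iff_componentwise by (simp add: image_image)
qed

lemma phi_least_fixpoint:
  assumes cpo: "omega_cpo TYPE('x::order)"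
    and s: "(s::('l,'x) sys) \<in> NIO Lam I Out" and i: "i \<in> I" and k: "k \<in> Out"
    and x: "x \<in> (I - {i}) \<rightarrow>\<^sub>E UNIV"
  shows "fn s (x(i := phi s i k x)) k = phi s i k x"
    and "fn s (x(i := p)) k \<le> p \<Longrightarrow> phi s i k x \<le> p"
proof -
  obtain a where a: "fn s (x(i := a)) k = a" "\<And>p. fn s (x(i := p)) k \<le> p \<Longrightarrow> a \<le> p"
    using omega_cpo_least_fixpoint[OF cpo NIO_omega_continuous_in_input[OF s i k x]] by blast
  have "phi s i k x = a" unfolding phi_def
    by (rule Least_equality) (use a in auto)
  with a show "fn s (x(i := phi s i k x)) k = phi s i k x"
    and "fn s (x(i := p)) k \<le> p \<Longrightarrow> phi s i k x \<le> p" by simp_all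
qed

lemma phi_mono:
  assumes cpo: "omega_cpo TYPE('x::order)"
    and s: "(s::('l,'x) sys) \<in> NIO Lam I Out" and i: "i \<in> I" and k: "k \<in> Out"
    and x: "x \<in> (I - {i}) \<rightarrow>\<^sub>E UNIV" and y: "y \<in> (I - {i}) \<rightarrow>\<^sub>E UNIV"
    and le: "pw_le (I - {i}) x y"
  shows "phi s i k x \<le> phi s i k y"
proof -
  let ?p = "phi s i k y"
  have "x(i := ?p) \<in> I \<rightarrow>\<^sub>E UNIV" "y(i := ?p) \<in> I \<rightarrow>\<^sub>E UNIV"
    using x y i by (auto simp: PiE_def extensional_def)
  moreover have "pw_le I (x(i := ?p)) (y(i := ?p))" using le by (auto simp: pw_le_def)
  ultimately have "pw_le Out (fn s (x(i := ?p))) (fn s (y(i := ?p)))"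
    using s omega_cont_imp_mono by (auto simp: NIO_def)
  hence "fn s (x(i := ?p)) k \<le> fn s (y(i := ?p)) k" using k by (simp add: pw_le_def)
  also have "\<dots> = ?p" by (rule phi_least_fixpoint(1)[OF cpo s i k y])
  finally show ?thesis by (rule phi_least_fixpoint(2)[OF cpo s i k x])
qed

lemma phi_continuous:
  assumes cpo: "omega_cpo TYPE('x::order)"
    and s: "(s::('l,'x) sys) \<in> NIO Lam I Out" and i: "i \<in> I" and k: "k \<in> Out"
    and c: "omega_chain_on (I - {i}) c" and u: "lub_on (I - {i}) (range c) u"
  shows "omega_chain (\<lambda>n. phi s i k (c n))" and "is_lub (range (\<lambda>n. phi s i k (c n))) (phi s i k u)"
proof -
  let ?p = "\<lambda>n. phi s i k (c n)"
  have cE: "c n \<in> (I - {i}) \<rightarrow>\<^sub>E UNIV" for n using c by (simp add: omega_chain_on_def)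
  have uE: "u \<in> (I - {i}) \<rightarrow>\<^sub>E UNIV" using u by (simp add: lub_on_def)
  show chain: "omega_chain ?p" unfolding omega_chain_def
    using phi_mono[OF cpo s i k cE cE] c by (simp add: omega_chain_on_def)
  then obtain l where l: "is_lub (range ?p) l" using cpo by (auto simp: omega_cpo_def)
  have "is_lub (range (\<lambda>n. fn s ((c n)(i := ?p n)) k)) (fn s (u(i := l)) k)"
    using NIO_cont_update[OF s i c u chain l] k unfolding lub_on_iff_componentwise
    by (simp add: image_image)
  hence "is_lub (range ?p) (fn s (u(i := l)) k)"
    by (simp add: phi_least_fixpoint(1)[OF cpo s i k cE])
  hence "fn s (u(i := l)) k = l" using l by (rule is_lub_unique)
  hence "phi s i k u \<le> l" by (simp add: phi_least_fixpoint(2)[OF cpo s i k uE])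
  moreover have "l \<le> phi s i k u"
    using l phi_mono[OF cpo s i k cE uE] u by (auto simp: is_lub_def lub_on_def)
  ultimately show "is_lub (range ?p) (phi s i k u)" using l by simp
qed

lemma gam_NIO:
  assumes cpo: "omega_cpo TYPE('x::order)"
    and s: "(s::('l,'x) sys) \<in> NIO Lam I Out" and i: "i \<in> I" and k: "k \<in> Out"
  shows "gam i k s \<in> NIO Lam (I - {i}) (Out - {k})"
proof -
  have sIO: "ins s = I" "outs s = Out" using s by (auto simp: NIO_def)
  have "omega_cont (I - {i}) (Out - {k}) (fn (gam i k s))"
    unfolding omega_cont_def
  proof (intro allI impI, elim conjE)
    fix c :: "nat \<Rightarrow> 'l \<Rightarrow> 'x" and u
    assume c: "omega_chain_on (I - {i}) c" and u: "lub_on (I - {i}) (range c) u"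
    let ?p = "\<lambda>n. phi s i k (c n)"
    have "c n \<in> (I - {i}) \<rightarrow>\<^sub>E UNIV" for n using c by (simp add: omega_chain_on_def)
    hence fc: "fn (gam i k s) (c n) = restrict (fn s ((c n)(i := ?p n))) (Out - {k})" for n
      by (simp add: gam_def sIO)
    have "u \<in> (I - {i}) \<rightarrow>\<^sub>E UNIV" using u by (simp add: lub_on_def)
    hence fu: "fn (gam i k s) u = restrict (fn s (u(i := phi s i k u))) (Out - {k})"
      by (simp add: gam_def sIO)
    have "lub_on Out (range (\<lambda>n. fn s ((c n)(i := ?p n)))) (fn s (u(i := phi s i k u)))"
      using NIO_cont_update[OF s i c u] phi_continuous[OF cpo s i k c u] by blast
    from lub_on_restrict[OF this, of "Out - {k}"]
    show "lub_on (Out - {k}) (fn (gam i k s) ` range c) (fn (gam i k s) u)"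
      unfolding fu image_image fc by (simp add: image_image)
  qed
  thus ?thesis using s i k by (auto simp: NIO_def gam_def)
qed

lemma lam_gam:
  assumes "s \<in> NIO Lam I Out" "i \<in> I" "k \<in> Out"
  shows "lam (gam i k s) = lam s - {i, k}"
  using assms by (auto simp: lam_def gam_def NIO_def)

section \<open>Parallel composition\<close>

lemma fn_par_apply:
  assumes "x \<in> (ins s1 \<union> ins s2) \<rightarrow>\<^sub>E UNIV" and "j \<in> outs s1 \<union> outs s2"
  shows "fn (par s1 s2) x j =
    (if j \<in> outs s1 then fn s1 (restrict x (ins s1)) j else fn s2 (restrict x (ins s2)) j)"
  using assms by (simp add: par_def)

lemma par_omega_cont:
  fixes s1 s2 :: "('l,'x::order) sys"
  assumes s1: "s1 \<in> NIO Lam I1 O1" and s2: "s2 \<in> NIO Lam I2 O2"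
  shows "omega_cont (I1 \<union> I2) (O1 \<union> O2) (fn (par s1 s2))"
  unfolding omega_cont_def
proof (intro allI impI, elim conjE)
  fix c :: "nat \<Rightarrow> 'l \<Rightarrow> 'x" and u
  assume c: "omega_chain_on (I1 \<union> I2) c" and u: "lub_on (I1 \<union> I2) (range c) u"
  have io: "ins s1 = I1" "outs s1 = O1" "ins s2 = I2" "outs s2 = O2"
    using s1 s2 by (auto simp: NIO_def)
  have restrict_lub: "is_lub (range (\<lambda>n. fn sj (restrict (c n) Ij) j)) (fn sj (restrict u Ij) j)"
    if "sj \<in> NIO Lam Ij Oj" "Ij \<subseteq> I1 \<union> I2" "j \<in> Oj" for sj :: "('l, 'x) sys" and Ij Oj j
  proof -
    have "lub_on Oj (range (\<lambda>n. fn sj (restrict (c n) Ij))) (fn sj (restrict u Ij))"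
      using that omega_chain_on_restrict[OF c] lub_on_restrict[OF u]
      by (auto simp: NIO_def omega_cont_def image_image)
    thus ?thesis using that(3) unfolding lub_on_iff_componentwise by (simp add: image_image)
  qed
  have cE: "c n \<in> (I1 \<union> I2) \<rightarrow>\<^sub>E UNIV" for n using c by (simp add: omega_chain_on_def)
  have uE: "u \<in> (I1 \<union> I2) \<rightarrow>\<^sub>E UNIV" using u by (simp add: lub_on_def)
  show "lub_on (O1 \<union> O2) (fn (par s1 s2) ` range c) (fn (par s1 s2) u)"
    unfolding lub_on_iff_componentwise
  proof (intro conjI ballI)
    show "fn (par s1 s2) u \<in> (O1 \<union> O2) \<rightarrow>\<^sub>E UNIV" using uE by (simp add: par_def io)
    fix j assume j: "j \<in> O1 \<union> O2"
    have par_j: "fn (par s1 s2) x j =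
      (if j \<in> O1 then fn s1 (restrict x I1) j else fn s2 (restrict x I2) j)"
      if "x \<in> (I1 \<union> I2) \<rightarrow>\<^sub>E UNIV" for x
      using fn_par_apply[of x s1 s2 j] that j by (simp add: io)
    have "(\<lambda>a. a j) ` fn (par s1 s2) ` range c = range (\<lambda>n. fn (par s1 s2) (c n) j)"
      by (simp add: image_image)
    also have "\<dots> = range (\<lambda>n. if j \<in> O1 then fn s1 (restrict (c n) I1) j
                                   else fn s2 (restrict (c n) I2) j)"
      by (simp add: par_j cE)
    finally show "is_lub ((\<lambda>a. a j) ` fn (par s1 s2) ` range c) (fn (par s1 s2) u j)"
      using restrict_lub[OF s1] restrict_lub[OF s2] j
      by (cases "j \<in> O1") (simp_all add: par_j uE)
  qed
qed

lemma par_NIO: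
  fixes s1 s2 :: "('l,'x::order) sys"
  assumes s1: "s1 \<in> NIO Lam I1 O1" and s2: "s2 \<in> NIO Lam I2 O2"
    and disj: "lam s1 \<inter> lam s2 = {}"
  shows "par s1 s2 \<in> NIO Lam (I1 \<union> I2) (O1 \<union> O2)"
proof -
  have io: "ins s1 = I1" "outs s1 = O1" "ins s2 = I2" "outs s2 = O2"
    using s1 s2 by (auto simp: NIO_def)
  have "fn (par s1 s2) \<in> (I1 \<union> I2 \<rightarrow>\<^sub>E UNIV) \<rightarrow>\<^sub>E (O1 \<union> O2 \<rightarrow>\<^sub>E UNIV)"
    by (simp add: par_def io)
  moreover have "ins (par s1 s2) = I1 \<union> I2" "outs (par s1 s2) = O1 \<union> O2"
    by (simp_all add: par_def io)
  moreover have "(I1 \<union> I2) \<inter> (O1 \<union> O2) = {}"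
  proof -
    have "I1 \<inter> O1 = {}" "I2 \<inter> O2 = {}" using s1 s2 by (simp_all add: NIO_def)
    with disj show ?thesis unfolding lam_def io by auto
  qed
  ultimately show ?thesis using s1 s2 par_omega_cont[OF s1 s2] unfolding NIO_def by simp
qed

lemma lam_par: "lam (par s1 s2) = lam s1 \<union> lam s2"
  by (auto simp: lam_def par_def)

lemma Gam_par_commute: "Gam (par s1 s2) = Gam (par s2 s1)"
  by (auto simp: Gam_def par_def)

lemma Gam_par_iff:
  assumes "lam s1 \<inter> lam s2 = {}" "i \<in> lam s1" "k \<in> lam s1"
  shows "{i, k} \<in> Gam (par s1 s2) \<longleftrightarrow> {i, k} \<in> Gam s1"
  using assms unfolding Gam_def lam_def par_def
  by (simp add: doubleton_eq_iff) blast

theorem theorem5p6: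
  fixes Lam :: "'l set"
  assumes "omega_cpo TYPE('x::order)"
  shows
    "(\<forall>(s1::('l,'x) sys) s2. s1 \<in> NN Lam \<and> s2 \<in> NN Lam \<and> lam s1 \<inter> lam s2 = {} \<longrightarrow>
        par s1 s2 \<in> NIO Lam (ins s1 \<union> ins s2) (outs s1 \<union> outs s2) \<and>
        lam (par s1 s2) = lam s1 \<union> lam s2 \<and>
        (\<forall>i k. i \<in> lam s1 \<and> k \<in> lam s1 \<longrightarrow> ({i, k} \<in> Gam (par s1 s2) \<longleftrightarrow> {i, k} \<in> Gam s1)) \<and>
        (\<forall>i k. i \<in> lam s2 \<and> k \<in> lam s2 \<longrightarrow> ({i, k} \<in> Gam (par s1 s2) \<longleftrightarrow> {i, k} \<in> Gam s2)))
     \<and> (\<forall>I Out (s::('l,'x) sys) i k. s \<in> NIO Lam I Out \<and> i \<in> I \<and> k \<in> Out \<longrightarrow>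
        gam i k s \<in> NIO Lam (I - {i}) (Out - {k}) \<and> lam (gam i k s) = lam s - {i, k})"
proof (intro conjI allI impI; elim conjE)
  fix s1 s2 :: "('l,'x) sys"
  assume n1: "s1 \<in> NN Lam" and n2: "s2 \<in> NN Lam" and disj: "lam s1 \<inter> lam s2 = {}"
  obtain I1 O1 I2 O2 where s1: "s1 \<in> NIO Lam I1 O1" and s2: "s2 \<in> NIO Lam I2 O2"
    using n1 n2 by (auto simp: NN_def)
  then have "ins s1 = I1" "outs s1 = O1" "ins s2 = I2" "outs s2 = O2" by (auto simp: NIO_def)
  with par_NIO[OF s1 s2 disj]
  show "par s1 s2 \<in> NIO Lam (ins s1 \<union> ins s2) (outs s1 \<union> outs s2)" by simp
  show "lam (par s1 s2) = lam s1 \<union> lam s2" by (rule lam_par)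
  show "{i, k} \<in> Gam (par s1 s2) \<longleftrightarrow> {i, k} \<in> Gam s1" if "i \<in> lam s1" "k \<in> lam s1" for i k
    by (rule Gam_par_iff[OF disj that])
  have "lam s2 \<inter> lam s1 = {}" using disj by blast
  from Gam_par_iff[OF this]
  show "{i, k} \<in> Gam (par s1 s2) \<longleftrightarrow> {i, k} \<in> Gam s2" if "i \<in> lam s2" "k \<in> lam s2" for i k
    using that by (simp add: Gam_par_commute)
next
  fix I Out i k and s :: "('l,'x) sys"
  assume "s \<in> NIO Lam I Out" and "i \<in> I" and "k \<in> Out"
  then show "gam i k s \<in> NIO Lam (I - {i}) (Out - {k})" and "lam (gam i k s) = lam s - {i, k}"
    by (rule gam_NIO[OF assms], rule lam_gam)
qed

end
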